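(* Let $(\Omega,\mathcal{F},\mathbb{P})$ be a purely atomic probability space and let $\mathcal{A}\subset L^0_+$ be solid. Then $\mathcal{A}$ is tight if and only if $\mathcal{A}$ is radially bounded.
   Context: An atom is a set $A\in\mathcal{F}$ with $\mathbb{P}(A)>0$ such that every $E\in\mathcal{F}$ with $E\subset A$ satisfies $\mathbb{P}(E)=0$ or $\mathbb{P}(E)=\mathbb{P}(A)$; the space is purely atomic if every $E\in\mathcal{F}$ with $\mathbb{P}(E)>0$ contains an atom. $L^0$ denotes the space of real-valued measurable functions on $\Omega$ modulo $\mathbb{P}$-a.s. equality, ordered by $X\ge Y$ iff $\mathbb{P}(X\ge Y)=1$; $L^0_+=\{X\in L^0: X\ge 0\}$. A set $\mathcal{A}\subset L^0$ is solid if $X\in\mathcal{A}$ and $|Y|\le|X|$ imply $Y\in\mathcal{A}$. A set $\mathcal{A}$ is radially bounded if for every $X\in\mathcal{A}\setminus\{0\}$ there exists $\lambda_X\in(0,\infty)$ such that $\lambda X\notin\mathcal{A}$ for all $\lambda\in(\lambda_X,\infty)$. A set $\mathcal{A}$ is tight if for every $\varepsilon>0$ there exists $M>0$ with $\sup_{X\in\mathcal{A}}\mathbb{P}(|X|>M)<\varepsilon$. *)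

theory Defs
  imports "HOL-Probability.Probability"
begin

text \<open>Random variables are represented by measurable functions; elements of
  L^0 are their classes modulo a.s. equality.  All notions below are invariant
  under a.s. modification (for solid sets).\<close>

definition atom :: "'a measure \<Rightarrow> 'a set \<Rightarrow> bool" where
  "atom M A \<longleftrightarrow> A \<in> sets M \<and> measure M A > 0 \<and>
     (\<forall>E\<in>sets M. E \<subseteq> A \<longrightarrow> measure M E = 0 \<or> measure M E = measure M A)"

definition purely_atomic :: "'a measure \<Rightarrow> bool" where
  "purely_atomic M \<longleftrightarrow>
     (\<forall>E\<in>sets M. measure M E > 0 \<longrightarrow> (\<exists>A. A \<subseteq> E \<and> atom M A))"

definition L0_pos :: "'a measure \<Rightarrow> ('a \<Rightarrow> real) set" where
  "L0_pos M = {X. X \<in> borel_measurable M \<and> (AE \<omega> in M. 0 \<le> X \<omega>)}"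

definition solid :: "'a measure \<Rightarrow> ('a \<Rightarrow> real) set \<Rightarrow> bool" where
  "solid M \<A> \<longleftrightarrow> (\<forall>X\<in>\<A>. \<forall>Y\<in>L0_pos M.
      (AE \<omega> in M. \<bar>Y \<omega>\<bar> \<le> \<bar>X \<omega>\<bar>) \<longrightarrow> Y \<in> \<A>)"

definition radially_bounded :: "'a measure \<Rightarrow> ('a \<Rightarrow> real) set \<Rightarrow> bool" where
  "radially_bounded M \<A> \<longleftrightarrow> (\<forall>X\<in>\<A>. \<not> (AE \<omega> in M. X \<omega> = 0) \<longrightarrow>
      (\<exists>c>0. \<forall>t::real. t > c \<longrightarrow> (\<lambda>\<omega>. t * X \<omega>) \<notin> \<A>))"

text \<open>sup_{X in A} P(|X|>M) < eps, written without Sup (A may be empty).\<close>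
definition tight :: "'a measure \<Rightarrow> ('a \<Rightarrow> real) set \<Rightarrow> bool" where
  "tight M \<A> \<longleftrightarrow> (\<forall>\<epsilon>>0. \<exists>K>0. \<exists>\<delta><\<epsilon>. \<forall>X\<in>\<A>.
      measure M {\<omega>\<in>space M. \<bar>X \<omega>\<bar> > K} \<le> \<delta>)"

end

theory Submission
  imports Defs
begin

text \<open>A set bounded in probability cannot contain arbitrarily large multiples of a nonzero
  variable X, because these multiples exceed any level on a fixed set of positive measure where
  X is bounded away from 0. Conversely, if tightness fails, there are X n in the set with
  P(X n > n) uniformly bounded below; the limsup of these events has positive measure and thus
  contains an atom A, which is up to a null set contained in infinitely many of them. By solidity,
  t times the indicator of A then lies in the set for arbitrarily large t.\<close>

lemma exists_level_set_not_null:
  fixes X :: "'a \<Rightarrow> real"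
  assumes X: "X \<in> borel_measurable M" and nonzero: "\<not> (AE \<omega> in M. X \<omega> = 0)"
  obtains \<eta> where "\<eta> > 0" "{\<omega>\<in>space M. \<eta> < \<bar>X \<omega>\<bar>} \<notin> null_sets M"
proof -
  define S where "S k = {\<omega>\<in>space M. 1 / real (Suc k) < \<bar>X \<omega>\<bar>}" for k
  have cover: "{\<omega>\<in>space M. \<not> X \<omega> = 0} \<subseteq> (\<Union>k. S k)"
  proof
    fix \<omega> assume \<omega>: "\<omega> \<in> {\<omega>\<in>space M. \<not> X \<omega> = 0}"
    then have "0 < \<bar>X \<omega>\<bar>" by simp
    then obtain k where "inverse (real (Suc k)) < \<bar>X \<omega>\<bar>"
      using reals_Archimedean by blast
    with \<omega> show "\<omega> \<in> (\<Union>k. S k)"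
      by (auto simp: S_def inverse_eq_divide)
  qed
  have "(\<Union>k. S k) \<notin> null_sets M"
    using AE_I'[OF _ cover] nonzero by blast
  moreover have "S k \<in> sets M" for k
    unfolding S_def using X by measurable
  ultimately obtain k where "S k \<notin> null_sets M"
    using null_sets_UN by blast
  then show thesis
    by (intro that[of "1 / real (Suc k)"]) (simp_all add: S_def)
qed

lemma tight_imp_radially_bounded:
  assumes "finite_measure M" and borel: "\<A> \<subseteq> borel_measurable M" and "tight M \<A>"
  shows "radially_bounded M \<A>"
  unfolding radially_bounded_def
proof (intro ballI impI)
  interpret finite_measure M by fact
  fix X assume "X \<in> \<A>" and nonzero: "\<not> (AE \<omega> in M. X \<omega> = 0)"
  then have X: "X \<in> borel_measurable M" using borel by auto
  obtain \<eta> where \<eta>: "\<eta> > 0" and not_null: "{\<omega>\<in>space M. \<eta> < \<bar>X \<omega>\<bar>} \<notin> null_sets M"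
    using exists_level_set_not_null[OF X nonzero] .
  define p where "p = measure M {\<omega>\<in>space M. \<eta> < \<bar>X \<omega>\<bar>}"
  have "p > 0"
    using not_null X unfolding p_def
    by (auto simp: null_sets_def emeasure_eq_measure zero_less_measure_iff)
  with \<open>tight M \<A>\<close> obtain K \<delta> where K: "K > 0" "\<delta> < p"
    and bound: "\<And>Y. Y \<in> \<A> \<Longrightarrow> measure M {\<omega>\<in>space M. K < \<bar>Y \<omega>\<bar>} \<le> \<delta>"
    unfolding tight_def by meson
  show "\<exists>c>0. \<forall>t. t > c \<longrightarrow> (\<lambda>\<omega>. t * X \<omega>) \<notin> \<A>"
  proof (intro exI[of _ "K / \<eta>"] conjI allI impI notI)
    show "K / \<eta> > 0" using K \<eta> by simp
    fix t assume t: "t > K / \<eta>" and "(\<lambda>\<omega>. t * X \<omega>) \<in> \<A>"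
    then have "t > 0" using K \<eta> by (meson divide_pos_pos less_trans)
    have "{\<omega>\<in>space M. \<eta> < \<bar>X \<omega>\<bar>} \<subseteq> {\<omega>\<in>space M. K < \<bar>t * X \<omega>\<bar>}"
    proof safe
      fix \<omega> assume "\<eta> < \<bar>X \<omega>\<bar>"
      have "K < t * \<eta>" using t \<eta> by (simp add: field_simps)
      also have "\<dots> < t * \<bar>X \<omega>\<bar>"
        using \<open>\<eta> < \<bar>X \<omega>\<bar>\<close> \<open>t > 0\<close> by simp
      finally show "K < \<bar>t * X \<omega>\<bar>"
        using \<open>t > 0\<close> by (simp add: abs_mult)
    qed
    then have "p \<le> measure M {\<omega>\<in>space M. K < \<bar>t * X \<omega>\<bar>}"
      unfolding p_def using X by (intro finite_measure_mono) measurable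
    also have "\<dots> \<le> \<delta>" using bound \<open>(\<lambda>\<omega>. t * X \<omega>) \<in> \<A>\<close> by blast
    finally show False using K by simp
  qed
qed

lemma (in finite_measure) measure_limsup_ge:
  assumes "range A \<subseteq> sets M" and "\<And>n. c \<le> measure M (A n)"
  shows "c \<le> measure M (limsup A)"
proof -
  define T where "T N = (\<Union>n\<in>{N..}. A n)" for N
  have "range T \<subseteq> sets M"
    using assms(1) by (auto simp: T_def)
  moreover have "decseq T"
    unfolding decseq_def T_def by (intro allI impI UN_mono) auto
  ultimately have "(\<lambda>N. measure M (T N)) \<longlonglongrightarrow> measure M (\<Inter>N. T N)"
    by (rule finite_Lim_measure_decseq)
  moreover have "c \<le> measure M (T N)" for N
  proof -
    have "A N \<subseteq> T N" by (auto simp: T_def)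
    then show ?thesis
      using assms \<open>range T \<subseteq> sets M\<close> finite_measure_mono by (meson order_trans range_subsetD)
  qed
  ultimately have "c \<le> measure M (\<Inter>N. T N)"
    using LIMSEQ_le_const by blast
  then show ?thesis
    by (simp add: limsup_INF_SUP T_def)
qed

lemma (in finite_measure) atom_almost_inside_member:
  fixes B :: "'i::countable \<Rightarrow> 'a set"
  assumes "atom M A" and "range B \<subseteq> sets M" and "A \<subseteq> (\<Union>n. B n)"
  obtains n where "A - B n \<in> null_sets M"
proof (rule ccontr)
  assume no_member: "\<not> thesis"
  have A: "A \<in> sets M" "measure M A > 0"
    and dichotomy: "\<And>E. E \<in> sets M \<Longrightarrow> E \<subseteq> A \<Longrightarrow> measure M E = 0 \<or> measure M E = measure M A"
    using \<open>atom M A\<close> unfolding atom_def by auto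
  have "A \<inter> B n \<in> null_sets M" for n
  proof -
    have sets: "A \<inter> B n \<in> sets M" "A - B n \<in> sets M" using A assms(2) by auto
    have "measure M (A - B n) \<noteq> 0"
      using no_member that sets by (auto simp: null_sets_def emeasure_eq_measure)
    moreover have "measure M (A - B n) = measure M A - measure M (A \<inter> B n)"
      using A(1) assms(2) by (intro finite_measure_Diff') auto
    ultimately show ?thesis
      using dichotomy[of "A \<inter> B n"] sets by (auto simp: null_sets_def emeasure_eq_measure)
  qed
  then have "(\<Union>n. A \<inter> B n) \<in> null_sets M"
    by (rule null_sets_UN)
  moreover have "A = (\<Union>n. A \<inter> B n)"
    using assms(3) by blast
  ultimately have "A \<in> null_sets M"
    by metis
  then show False using A(2) by (simp add: measure_eq_0_null_sets)
qed

lemma (in finite_measure) atom_in_limsup_almost_inside_frequently: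
  assumes "atom M A" and S: "range S \<subseteq> sets M" and "A \<subseteq> limsup S"
  obtains n where "N \<le> n" and "A - S n \<in> null_sets M"
proof -
  have cover: "A \<subseteq> (\<Union>k. S (k + N))"
  proof
    fix \<omega> assume "\<omega> \<in> A"
    then obtain m where "N \<le> m" "\<omega> \<in> S m"
      using \<open>A \<subseteq> limsup S\<close> by (auto simp: limsup_INF_SUP)
    then show "\<omega> \<in> (\<Union>k. S (k + N))"
      by (intro UN_I[of "m - N"]) auto
  qed
  have "range (\<lambda>k. S (k + N)) \<subseteq> sets M"
    using S by auto
  then obtain k where "A - S (k + N) \<in> null_sets M"
    by (rule atom_almost_inside_member[OF \<open>atom M A\<close> _ cover])
  then show thesis
    by (intro that[of "k + N"]) simp_all
qed

lemma solidD:
  "solid M \<A> \<Longrightarrow> X \<in> \<A> \<Longrightarrow> Y \<in> L0_pos M \<Longrightarrow> (AE \<omega> in M. \<bar>Y \<omega>\<bar> \<le> \<bar>X \<omega>\<bar>) \<Longrightarrow> Y \<in> \<A>"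
  unfolding solid_def by blast

lemma solid_scaled_indicator_mem:
  assumes "solid M \<A>" and "X \<in> \<A>" and A: "A \<in> sets M" and "0 \<le> t"
    and "A - {\<omega>\<in>space M. t \<le> \<bar>X \<omega>\<bar>} \<in> null_sets M"
  shows "(\<lambda>\<omega>. t * indicator A \<omega>) \<in> \<A>"
proof (rule solidD[OF assms(1,2)])
  show "AE \<omega> in M. \<bar>t * indicator A \<omega>\<bar> \<le> \<bar>X \<omega>\<bar>"
    by (rule AE_I'[OF assms(5)]) (use \<open>0 \<le> t\<close> in \<open>auto simp: indicator_def\<close>)
  have "(\<lambda>\<omega>. t * indicator A \<omega>) \<in> borel_measurable M"
    using A by measurable
  moreover have "AE \<omega> in M. 0 \<le> t * indicator A \<omega>"
    using \<open>0 \<le> t\<close> by (intro AE_I2) simp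
  ultimately show "(\<lambda>\<omega>. t * indicator A \<omega>) \<in> L0_pos M"
    unfolding L0_pos_def by simp
qed

lemma not_tight_imp_mass_beyond_every_level:
  assumes "\<not> tight M \<A>"
  obtains \<epsilon> where "\<epsilon> > 0" "\<And>K. K > 0 \<Longrightarrow> \<exists>X\<in>\<A>. \<epsilon> \<le> measure M {\<omega>\<in>space M. K < \<bar>X \<omega>\<bar>}"
proof -
  obtain \<epsilon> where "\<epsilon> > 0"
    and exceeds: "\<And>K \<delta>. K > 0 \<Longrightarrow> \<delta> < \<epsilon> \<Longrightarrow> \<exists>X\<in>\<A>. \<delta> < measure M {\<omega>\<in>space M. K < \<bar>X \<omega>\<bar>}"
    using assms unfolding tight_def by (meson not_le)
  have half: "\<epsilon> / 2 < \<epsilon>"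
    using \<open>\<epsilon> > 0\<close> by simp
  have "\<exists>X\<in>\<A>. \<epsilon> / 2 \<le> measure M {\<omega>\<in>space M. K < \<bar>X \<omega>\<bar>}" if "K > 0" for K
    using exceeds[OF that half] less_imp_le by blast
  from that[OF _ this] show thesis
    using \<open>\<epsilon> > 0\<close> by simp
qed

lemma radially_bounded_imp_tight:
  assumes "finite_measure M" and "purely_atomic M" and borel: "\<A> \<subseteq> borel_measurable M"
    and "solid M \<A>" and "radially_bounded M \<A>"
  shows "tight M \<A>"
proof (rule ccontr)
  interpret finite_measure M by fact
  assume "\<not> tight M \<A>"
  then obtain \<epsilon> where "\<epsilon> > 0"
    and mass: "\<And>K. K > 0 \<Longrightarrow> \<exists>X\<in>\<A>. \<epsilon> \<le> measure M {\<omega>\<in>space M. K < \<bar>X \<omega>\<bar>}"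
    using not_tight_imp_mass_beyond_every_level by blast
  have "\<forall>n::nat. \<exists>X\<in>\<A>. \<epsilon> \<le> measure M {\<omega>\<in>space M. real (Suc n) < \<bar>X \<omega>\<bar>}"
    using mass by simp
  then obtain X where X: "\<And>n. X n \<in> \<A>"
    and mass_X: "\<And>n. \<epsilon> \<le> measure M {\<omega>\<in>space M. real (Suc n) < \<bar>X n \<omega>\<bar>}"
    by metis
  have [measurable]: "X n \<in> borel_measurable M" for n
    using X borel by auto
  define S where "S n = {\<omega>\<in>space M. real (Suc n) < \<bar>X n \<omega>\<bar>}" for n
  have S: "range S \<subseteq> sets M"
    unfolding S_def by auto
  have "0 < measure M (limsup S)"
    using measure_limsup_ge[OF S, of \<epsilon>] mass_X \<open>\<epsilon> > 0\<close> by (simp add: S_def)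
  then obtain A where "A \<subseteq> limsup S" and "atom M A"
    using \<open>purely_atomic M\<close> S unfolding purely_atomic_def by (meson measurable_limsup range_subsetD)
  then have A: "A \<in> sets M" "A \<notin> null_sets M"
    unfolding atom_def by (auto dest: measure_eq_0_null_sets)
  have scaled_mem: "(\<lambda>\<omega>. t * indicator A \<omega>) \<in> \<A>" if "0 \<le> t" for t
  proof -
    obtain N where "t \<le> real N" using real_arch_simple by blast
    obtain n where "N \<le> n" and "A - S n \<in> null_sets M"
      using atom_in_limsup_almost_inside_frequently[OF \<open>atom M A\<close> S \<open>A \<subseteq> limsup S\<close>] by blast
    moreover have "S n \<subseteq> {\<omega>\<in>space M. t \<le> \<bar>X n \<omega>\<bar>}"
      using \<open>t \<le> real N\<close> \<open>N \<le> n\<close> by (auto simp: S_def)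
    moreover have "A - {\<omega>\<in>space M. t \<le> \<bar>X n \<omega>\<bar>} \<in> sets M"
      using A(1) by measurable
    ultimately have "A - {\<omega>\<in>space M. t \<le> \<bar>X n \<omega>\<bar>} \<in> null_sets M"
      by (blast intro: null_sets_subset)
    then show ?thesis
      using solid_scaled_indicator_mem[OF \<open>solid M \<A>\<close> X A(1) that] by blast
  qed
  have "{\<omega>\<in>space M. \<not> indicator A \<omega> = (0::real)} = A"
    using sets.sets_into_space[OF A(1)] by (auto simp: indicator_def)
  then have "\<not> (AE \<omega> in M. indicator A \<omega> = (0::real))"
    using AE_iff_measurable[OF A(1)] A by (simp add: null_sets_def)
  moreover have "indicator A \<in> \<A>"
    using scaled_mem[of 1] by simp
  ultimately obtain c where "c > 0" "(\<lambda>\<omega>. (c + 1) * indicator A \<omega>) \<notin> \<A>"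
    using \<open>radially_bounded M \<A>\<close> unfolding radially_bounded_def by fastforce
  with scaled_mem[of "c + 1"] show False by simp
qed

theorem proposition3p7:
  fixes M :: "'a measure" and \<A> :: "('a \<Rightarrow> real) set"
  assumes "prob_space M"
    and "purely_atomic M"
    and "\<A> \<subseteq> L0_pos M"
    and "solid M \<A>"
  shows "tight M \<A> \<longleftrightarrow> radially_bounded M \<A>"
proof -
  have "finite_measure M"
    using assms(1) by (simp add: prob_space_def)
  moreover have "\<A> \<subseteq> borel_measurable M"
    using assms(3) by (auto simp: L0_pos_def)
  ultimately show ?thesis
    using tight_imp_radially_bounded radially_bounded_imp_tight assms(2,4) by blast
qed

end
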